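(* Let $a$ and $b$ be coprime odd integers and let $\beta$ be a non-negative integer. Then $EG_{(a,b)}(\beta)\neq\emptyset$ if and only if $\beta\in\{0,1\}$; equivalently, $EG_{(a,b)}(\beta)=\emptyset$ if and only if $\beta\geq 2$.
   Context: For coprime nonzero integers $a,b$ and an integer $\beta\geq0$, $EG_{(a,b)}(\beta)$ is the set of positive integers $d$ such that $2^\beta d\mid(a^k+b^k)$ for some even integer $k\geq 2$. *)

theory Defs
  imports Main
begin

definition EG :: "int \<Rightarrow> int \<Rightarrow> nat \<Rightarrow> nat set" where
  "EG a b \<beta> = {d. d > 0 \<and> (\<exists>k::nat. even k \<and> k \<ge> 2 \<and>
       (2 ^ \<beta> * int d) dvd (a ^ k + b ^ k))}"

end

theory Submission
  imports Defs
begin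

text \<open>For odd \<open>a\<close> and even \<open>k\<close> we have \<open>a\<^sup>k \<equiv> 1 (mod 4)\<close>, so \<open>a\<^sup>k + b\<^sup>k \<equiv> 2 (mod 4)\<close>
  for odd \<open>a, b\<close>: the power of 2 dividing it is exactly 2, which rules out \<open>\<beta> \<ge> 2\<close>,
  while \<open>d = 1, k = 2\<close> is a witness for \<open>\<beta> \<le> 1\<close>.\<close>

lemma odd_power_even_mod_4:
  fixes a :: int
  assumes "odd a" "even k"
  shows "a ^ k mod 4 = 1"
proof -
  obtain m where k: "k = 2 * m" using assms(2) by blast
  obtain c where "a = 2 * c + 1" using assms(1) oddE by blast
  then have "a\<^sup>2 = 4 * (c\<^sup>2 + c) + 1" by (simp add: power2_eq_square algebra_simps)
  then have square: "a\<^sup>2 mod 4 = 1" by presburger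
  have "a ^ k mod 4 = (a\<^sup>2 mod 4) ^ m mod 4"
    by (simp add: k power_mult power_mod)
  with square show ?thesis by simp
qed

lemma odd_power_sum_even_mod_4:
  fixes a b :: int
  assumes "odd a" "odd b" "even k"
  shows "(a ^ k + b ^ k) mod 4 = 2"
proof -
  have "(a ^ k + b ^ k) mod 4 = (a ^ k mod 4 + b ^ k mod 4) mod 4"
    by (rule mod_add_eq[symmetric])
  with assms show ?thesis by (simp add: odd_power_even_mod_4)
qed

lemma EG_odd_eq_empty:
  assumes "odd a" "odd b" "\<beta> \<ge> 2"
  shows "EG a b \<beta> = {}"
proof (rule ccontr)
  assume "EG a b \<beta> \<noteq> {}"
  then obtain d k where k: "even k" and dvd_sum: "(2 ^ \<beta> * int d) dvd (a ^ k + b ^ k)"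
    unfolding EG_def by blast
  have "(2::int) ^ 2 dvd 2 ^ \<beta>"
    using assms(3) by (rule le_imp_power_dvd)
  then have "(4::int) dvd a ^ k + b ^ k"
    using dvd_sum by (auto intro: dvd_trans dvd_mult2)
  with odd_power_sum_even_mod_4[OF assms(1,2) k] show False by simp
qed

lemma one_mem_EG_odd:
  assumes "odd a" "odd b" "\<beta> \<le> 1"
  shows "1 \<in> EG a b \<beta>"
proof -
  have "even (a\<^sup>2 + b\<^sup>2)" using assms(1,2) by simp
  moreover have "\<beta> = 0 \<or> \<beta> = 1" using assms(3) by auto
  ultimately have "(2 ^ \<beta> * int 1) dvd (a\<^sup>2 + b\<^sup>2)" by auto
  then show ?thesis unfolding EG_def by (intro CollectI conjI exI[of _ 2]) auto
qed

theorem theorem2p20: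
  fixes a b :: int and \<beta> :: nat
  assumes "coprime a b" and "odd a" and "odd b"
  shows "EG a b \<beta> \<noteq> {} \<longleftrightarrow> \<beta> \<in> {0, 1}"
proof (cases "\<beta> \<le> 1")
  case True
  with one_mem_EG_odd[OF assms(2,3)] show ?thesis by auto
next
  case False
  with EG_odd_eq_empty[OF assms(2,3)] show ?thesis by auto
qed

end
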